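(* Let $H$ be a complex Hilbert space and let $T\in B(H)$ be written as $T=A+iB$ with $A=\frac{T+T^*}{2}$ and $B=\frac{T-T^*}{2i}$ (both self-adjoint). Let $n\geq 2$ be an integer. If $T^n=0$ and either $A\geq 0$ or $B\geq 0$, then $T=0$.
   Context: $B(H)$ denotes the algebra of all bounded linear operators from $H$ to $H$. An operator $S\in B(H)$ is positive, written $S\geq 0$, if $\langle Sx,x\rangle\geq 0$ for all $x\in H$. *)

theory Defs
  imports "HOL-Analysis.Analysis"
begin

text \<open>A complex Hilbert space: the carrier is the type 'a (an additive group),
  with complex scalar multiplication sc and inner product ip (linear in the
  first argument, conjugate-linear in the second), complete for the induced norm.\<close>

definition cnorm :: "('a \<Rightarrow> 'a \<Rightarrow> complex) \<Rightarrow> 'a \<Rightarrow> real" where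
  "cnorm ip x = sqrt (Re (ip x x))"

definition complex_hilbert_space ::
  "(complex \<Rightarrow> 'a::ab_group_add \<Rightarrow> 'a) \<Rightarrow> ('a \<Rightarrow> 'a \<Rightarrow> complex) \<Rightarrow> bool" where
  "complex_hilbert_space sc ip \<longleftrightarrow>
     (\<forall>a x y. sc a (x + y) = sc a x + sc a y) \<and>
     (\<forall>a b x. sc (a + b) x = sc a x + sc b x) \<and>
     (\<forall>a b x. sc a (sc b x) = sc (a * b) x) \<and>
     (\<forall>x. sc 1 x = x) \<and>
     (\<forall>x y z. ip (x + y) z = ip x z + ip y z) \<and>
     (\<forall>a x y. ip (sc a x) y = a * ip x y) \<and>
     (\<forall>x y. ip y x = cnj (ip x y)) \<and>
     (\<forall>x. Im (ip x x) = 0 \<and> Re (ip x x) \<ge> 0) \<and>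
     (\<forall>x. ip x x = 0 \<longrightarrow> x = 0) \<and>
     (\<forall>X :: nat \<Rightarrow> 'a.
        (\<forall>e>0. \<exists>N. \<forall>m\<ge>N. \<forall>n\<ge>N. cnorm ip (X m - X n) < e) \<longrightarrow>
        (\<exists>L. \<forall>e>0. \<exists>N. \<forall>n\<ge>N. cnorm ip (X n - L) < e))"

definition bounded_op ::
  "(complex \<Rightarrow> 'a::ab_group_add \<Rightarrow> 'a) \<Rightarrow> ('a \<Rightarrow> 'a \<Rightarrow> complex) \<Rightarrow> ('a \<Rightarrow> 'a) \<Rightarrow> bool" where
  "bounded_op sc ip T \<longleftrightarrow>
     (\<forall>x y. T (x + y) = T x + T y) \<and> (\<forall>a x. T (sc a x) = sc a (T x)) \<and>
     (\<exists>K. \<forall>x. cnorm ip (T x) \<le> K * cnorm ip x)"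

definition is_adjoint :: "('a \<Rightarrow> 'a \<Rightarrow> complex) \<Rightarrow> ('a \<Rightarrow> 'a) \<Rightarrow> ('a \<Rightarrow> 'a) \<Rightarrow> bool" where
  "is_adjoint ip T S \<longleftrightarrow> (\<forall>x y. ip (T x) y = ip x (S y))"

definition positive_op :: "('a \<Rightarrow> 'a \<Rightarrow> complex) \<Rightarrow> ('a \<Rightarrow> 'a) \<Rightarrow> bool" where
  "positive_op ip S \<longleftrightarrow> (\<forall>x. Im (ip (S x) x) = 0 \<and> Re (ip (S x) x) \<ge> 0)"

end

theory Submission
  imports Defs
begin

text \<open>
  Rotating by a unimodular scalar \<open>w\<close> (\<open>w = 1\<close> if \<open>A \<ge> 0\<close>, \<open>w = -\<i>\<close> if \<open>B \<ge> 0\<close>) we get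
  \<open>Re (w \<langle>Tx,x\<rangle>) \<ge> 0\<close> for all \<open>x\<close>. If \<open>Tx = 0\<close>, expanding this at \<open>x + sy\<close> gives
  \<open>Re (s w \<langle>Ty,x\<rangle>) + |s|\<^sup>2 Re (w \<langle>Ty,y\<rangle>) \<ge> 0\<close> for every complex \<open>s\<close>, which forces
  \<open>\<langle>y,T\<^sup>*x\<rangle> = \<langle>Ty,x\<rangle> = 0\<close>; hence \<open>ker T \<subseteq> ker T\<^sup>*\<close>. Then \<open>T\<^sup>2x = 0\<close> gives \<open>T\<^sup>*Tx = 0\<close>,
  so \<open>\<parallel>Tx\<parallel>\<^sup>2 = \<langle>x,T\<^sup>*Tx\<rangle> = 0\<close>: \<open>ker T\<^sup>2 = ker T\<close>, and nilpotency collapses to \<open>T = 0\<close>.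
\<close>

lemma complex_eq_0_if_Re_linear_plus_quadratic_nonneg:
  fixes a :: complex and R :: real
  assumes "\<And>s. 0 \<le> Re (s * a) + (cmod s)\<^sup>2 * R"
  shows "a = 0"
proof (rule ccontr)
  assume "a \<noteq> 0"
  define t where "t = 1 / (\<bar>R\<bar> + 1)"
  have "t > 0" unfolding t_def by simp
  have "t * R < 1" unfolding t_def by (simp add: divide_simps) linarith
  have "Re ((- of_real t * cnj a) * a) = - t * (cmod a)\<^sup>2"
    by (simp add: mult.assoc complex_mult_cnj cmod_power2 flip: of_real_mult)
       (simp add: power2_eq_square)
  moreover have "(cmod (- of_real t * cnj a))\<^sup>2 = t\<^sup>2 * (cmod a)\<^sup>2"
    using \<open>t > 0\<close> by (simp add: norm_mult power_mult_distrib)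
  ultimately have "0 \<le> - t * (cmod a)\<^sup>2 + t\<^sup>2 * (cmod a)\<^sup>2 * R"
    using assms[of "- of_real t * cnj a"] by simp
  then have "0 \<le> t * (cmod a)\<^sup>2 * (t * R - 1)"
    by (simp add: algebra_simps power2_eq_square)
  moreover have "t * (cmod a)\<^sup>2 > 0" using \<open>t > 0\<close> \<open>a \<noteq> 0\<close> by simp
  ultimately have "t * R \<ge> 1" by (simp add: zero_le_mult_iff)
  with \<open>t * R < 1\<close> show False by simp
qed

lemma funpow_eq_0_imp_eq_0:
  fixes f :: "'a \<Rightarrow> 'a::zero"
  assumes "\<And>x. f (f x) = 0 \<Longrightarrow> f x = 0"
  shows "(f ^^ Suc k) x = 0 \<Longrightarrow> f x = 0"
proof (induction k arbitrary: x)
  case 0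
  then show ?case by simp
next
  case (Suc k)
  then have "(f ^^ Suc k) (f x) = 0" by (simp only: funpow_Suc_right o_apply)
  then show ?case using Suc.IH assms by blast
qed

locale definite_hermitian_form =
  fixes sc :: "complex \<Rightarrow> 'a::ab_group_add \<Rightarrow> 'a"
    and ip :: "'a \<Rightarrow> 'a \<Rightarrow> complex"
  assumes ip_add_left: "ip (x + y) z = ip x z + ip y z"
    and ip_scale_left: "ip (sc a x) y = a * ip x y"
    and ip_commute_cnj: "\<And>x y. ip y x = cnj (ip x y)"
    and ip_self_eq_0_imp: "ip x x = 0 \<Longrightarrow> x = 0"
begin

lemma ip_add_right: "ip z (x + y) = ip z x + ip z y"
  by (metis ip_add_left ip_commute_cnj complex_cnj_add)

lemma ip_scale_right: "ip x (sc a y) = cnj a * ip x y"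
  by (metis ip_scale_left ip_commute_cnj complex_cnj_mult)

lemma ip_zero_right: "ip z 0 = 0"
  using ip_add_right[of z 0 0] by simp

lemma ip_adjoint_self_cnj:
  assumes "is_adjoint ip T Tstar"
  shows "ip (Tstar x) x = cnj (ip (T x) x)"
  using assms ip_commute_cnj unfolding is_adjoint_def by metis

lemma Re_nonneg_if_real_part_positive:
  assumes "is_adjoint ip T Tstar"
    and "positive_op ip (\<lambda>x. sc (1/2) (T x + Tstar x))"
  shows "0 \<le> Re (ip (T x) x)"
proof -
  have "0 \<le> Re (ip (sc (1/2) (T x + Tstar x)) x)"
    using assms(2) unfolding positive_op_def by blast
  then show ?thesis
    by (simp add: ip_scale_left ip_add_left ip_adjoint_self_cnj[OF assms(1)])
qed

lemma Im_nonneg_if_imaginary_part_positive: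
  assumes "is_adjoint ip T Tstar"
    and "positive_op ip (\<lambda>x. sc (1/(2*\<i>)) (T x - Tstar x))"
  shows "0 \<le> Im (ip (T x) x)"
proof -
  have "0 \<le> Re (ip (sc (1/(2*\<i>)) (T x - Tstar x)) x)"
    using assms(2) unfolding positive_op_def by blast
  moreover have "ip (T x - Tstar x) x = ip (T x) x - ip (Tstar x) x"
    using ip_add_left[of "T x - Tstar x" "Tstar x" x] by simp
  ultimately have "0 \<le> Re ((1/(2*\<i>)) * (ip (T x) x - cnj (ip (T x) x)))"
    by (simp only: ip_scale_left ip_adjoint_self_cnj[OF assms(1)])
  then show ?thesis by (simp add: complex_diff_cnj)
qed

lemma accretive_kernel_subset_adjoint_kernel:
  assumes add: "\<And>x y. T (x + y) = T x + T y"
    and scale: "\<And>a x. T (sc a x) = sc a (T x)"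
    and adj: "is_adjoint ip T Tstar"
    and "w \<noteq> 0"
    and accretive: "\<And>x. 0 \<le> Re (w * ip (T x) x)"
    and "T x = 0"
  shows "Tstar x = 0"
proof -
  have "ip (T y) x = 0" for y
  proof -
    have "0 \<le> Re (s * (w * ip (T y) x)) + (cmod s)\<^sup>2 * Re (w * ip (T y) y)" for s
    proof -
      have "T (x + sc s y) = sc s (T y)" using add scale \<open>T x = 0\<close> by simp
      then have "w * ip (T (x + sc s y)) (x + sc s y)
                 = s * (w * ip (T y) x) + (s * cnj s) * (w * ip (T y) y)"
        by (simp add: ip_scale_left ip_add_right ip_scale_right algebra_simps)
      also have "s * cnj s = of_real ((cmod s)\<^sup>2)"
        by (metis complex_norm_square of_real_power)
      finally show ?thesis using accretive[of "x + sc s y"] by simp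
    qed
    then have "w * ip (T y) x = 0"
      by (rule complex_eq_0_if_Re_linear_plus_quadratic_nonneg)
    with \<open>w \<noteq> 0\<close> show ?thesis by simp
  qed
  then have "ip (Tstar x) (Tstar x) = 0"
    using adj ip_commute_cnj unfolding is_adjoint_def by (metis complex_cnj_zero)
  then show ?thesis by (rule ip_self_eq_0_imp)
qed

lemma kernel_square_subset_kernel:
  assumes adj: "is_adjoint ip T Tstar"
    and ker: "\<And>x. T x = 0 \<Longrightarrow> Tstar x = 0"
    and "T (T x) = 0"
  shows "T x = 0"
proof -
  have "ip (T x) (T x) = ip x (Tstar (T x))"
    using adj unfolding is_adjoint_def by blast
  also have "\<dots> = 0" using ker \<open>T (T x) = 0\<close> ip_zero_right by simp
  finally show ?thesis by (rule ip_self_eq_0_imp)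
qed

end

lemma complex_hilbert_space_definite_hermitian_form:
  "complex_hilbert_space sc ip \<Longrightarrow> definite_hermitian_form sc ip"
  unfolding complex_hilbert_space_def definite_hermitian_form_def
  by (elim conjE) (intro conjI; assumption)

theorem theorem1p1:
  fixes sc :: "complex \<Rightarrow> 'a::ab_group_add \<Rightarrow> 'a"
    and ip :: "'a \<Rightarrow> 'a \<Rightarrow> complex"
    and T Tstar :: "'a \<Rightarrow> 'a"
    and n :: nat
  assumes H: "complex_hilbert_space sc ip"
    and T: "bounded_op sc ip T"
    and adj: "is_adjoint ip T Tstar"
    and n: "n \<ge> 2"
    and nil: "\<forall>x. (T ^^ n) x = 0"
    and pos: "positive_op ip (\<lambda>x. sc (1/2) (T x + Tstar x))
              \<or> positive_op ip (\<lambda>x. sc (1/(2*\<i>)) (T x - Tstar x))"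
  shows "\<forall>x. T x = 0"
proof -
  interpret definite_hermitian_form sc ip
    using H by (rule complex_hilbert_space_definite_hermitian_form)
  have add: "\<And>x y. T (x + y) = T x + T y" and scale: "\<And>a x. T (sc a x) = sc a (T x)"
    using T unfolding bounded_op_def by blast+
  obtain w :: complex where "w \<noteq> 0" and "\<And>x. 0 \<le> Re (w * ip (T x) x)"
  proof (cases "positive_op ip (\<lambda>x. sc (1/2) (T x + Tstar x))")
    case True
    then show ?thesis using that[of 1] Re_nonneg_if_real_part_positive[OF adj] by simp
  next
    case False
    then show ?thesis
      using that[of "- \<i>"] pos Im_nonneg_if_imaginary_part_positive[OF adj] by simp
  qed
  then have "T x = 0" if "T (T x) = 0" for x
    using kernel_square_subset_kernel[OF adj] accretive_kernel_subset_adjoint_kernel[OF add scale adj]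
      that by blast
  moreover obtain k where "n = Suc k" using n by (cases n) auto
  ultimately show ?thesis
    using nil funpow_eq_0_imp_eq_0[of T k] by metis
qed

end
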